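(* Let $n\ge2$, $0\le\alpha<1$, $\sigma=1-\alpha^2$, and let $M$ be the matrix of $S^*(\phi_{-\alpha})$, where $\phi_{-\alpha}(z)=\left(\dfrac{z+\alpha}{1+\alpha z}\right)^n$; explicitly $M$ is the $n\times n$ upper triangular Toeplitz matrix with $-\alpha$ on the diagonal, $\sigma$ on the first superdiagonal and $\sigma\alpha^{j-1}$ on the $j$-th superdiagonal ($1\le j\le n-1$). For real $\theta$ and real $\lambda$ with $|\lambda|<1$, let $D_n(\lambda,\theta)=\det\big(\mathscr{R}e(e^{-i\theta}M)-\lambda I_n\big)$. Then $$D_{n}(\lambda,\theta)=\dfrac{(1-\lambda^{2})^{-\frac{1}{2}}}{2^n}\,\mathscr{R}e\Bigg(\left(\left(1-\lambda^{2}\right)^{\frac{1}{2}}+i\lambda\right)\left(-2\alpha\cos\theta-(1+\alpha^{2})\lambda+i(1-\alpha^{2})(1-\lambda^{2})^{\frac{1}{2}}\right)^n\Bigg).$$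
   Context: $\mathscr{R}e(X)=\frac12(X+X^* )$ for a matrix $X$, and $\mathscr{R}e(z)$ is the real part of a complex number $z$. $S^*(\phi)$ denotes the restriction of the backward shift $S^*f=(f-f(0))/z$ to the model space $\mathbb{H}^2\ominus\phi\mathbb{H}^2$. *)

theory Defs
  imports Complex_Main "Jordan_Normal_Form.Determinant"
begin

definition cadjoint :: "complex mat \<Rightarrow> complex mat" where
  "cadjoint X = mat (dim_col X) (dim_row X) (\<lambda>(i,j). cnj (X $$ (j,i)))"

definition Re_mat :: "complex mat \<Rightarrow> complex mat" where
  "Re_mat X = (1/2 :: complex) \<cdot>\<^sub>m (X + cadjoint X)"

definition Mmat :: "nat \<Rightarrow> real \<Rightarrow> complex mat" where
  "Mmat n \<alpha> = mat n n (\<lambda>(i,j).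
      if i = j then complex_of_real (- \<alpha>)
      else if i < j then complex_of_real ((1 - \<alpha>\<^sup>2) * \<alpha> ^ (j - i - 1))
      else 0)"

definition Dn :: "nat \<Rightarrow> real \<Rightarrow> real \<Rightarrow> real \<Rightarrow> complex" where
  "Dn n \<alpha> lam \<theta> = det (Re_mat (exp (- \<i> * complex_of_real \<theta>) \<cdot>\<^sub>m Mmat n \<alpha>)
                        - complex_of_real lam \<cdot>\<^sub>m 1\<^sub>m n)"

end

theory Submission
  imports Defs
begin

text \<open>
  \<open>Re(e\<^sup>-\<^sup>i\<^sup>\<theta> M) - \<lambda>I\<close> is a Toeplitz matrix whose off-diagonals are geometric in the distance
  to the diagonal. Subtracting \<open>\<alpha>\<close> times the second row from the first, and \<open>\<alpha>\<close> times the
  second column from the first, kills the geometric tails, so a Laplace expansion gives a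
  three-term recurrence \<open>D\<^sub>k\<^sub>+\<^sub>2 = X D\<^sub>k\<^sub>+\<^sub>1 - |w|\<^sup>2/4 D\<^sub>k\<close> with \<open>X\<close> real and \<open>w = X + i(1-\<alpha>\<^sup>2)\<surd>(1-\<lambda>\<^sup>2)\<close>.
  Since \<open>w\<^sup>2 = 2 Re w \<cdot> w - |w|\<^sup>2\<close>, the sequence \<open>Re(u w\<^sup>k)/2\<^sup>k\<close> satisfies the same recurrence for
  every \<open>u\<close>, and \<open>u = \<surd>(1-\<lambda>\<^sup>2) + i\<lambda>\<close> matches the initial values \<open>D\<^sub>0 = 1\<close>, \<open>D\<^sub>1 = -\<alpha> cos \<theta> - \<lambda>\<close>.
\<close>

definition geom_toeplitz_mat :: "nat \<Rightarrow> 'a::comm_ring_1 \<Rightarrow> 'a \<Rightarrow> 'a \<Rightarrow> 'a \<Rightarrow> 'a mat" where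
  "geom_toeplitz_mat n d a b r = mat n n (\<lambda>(i,j).
     if i = j then d else if i < j then a * r ^ (j - i - 1) else b * r ^ (i - j - 1))"

lemma geom_toeplitz_mat_carrier: "geom_toeplitz_mat n d a b r \<in> carrier_mat n n"
  by (simp add: geom_toeplitz_mat_def)

lemma det_geom_toeplitz_0: "det (geom_toeplitz_mat 0 d a b r) = 1"
  using geom_toeplitz_mat_carrier by (rule det_dim_zero)

lemma det_geom_toeplitz_1: "det (geom_toeplitz_mat 1 d a b r) = d"
  by (subst det_single[OF geom_toeplitz_mat_carrier]) (simp add: geom_toeplitz_mat_def)

lemma det_geom_toeplitz_Suc_Suc:
  "det (geom_toeplitz_mat (Suc (Suc n)) d a b r) =
     ((1 + r\<^sup>2) * d - r * (a + b)) * det (geom_toeplitz_mat (Suc n) d a b r)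
     - (a - r * d) * (b - r * d) * det (geom_toeplitz_mat n d a b r)"
proof -
  let ?N = "Suc (Suc n)"
  let ?A = "geom_toeplitz_mat ?N d a b r"
  let ?e = "(1 + r\<^sup>2) * d - r * (a + b)"
  have A: "?A \<in> carrier_mat ?N ?N" by (rule geom_toeplitz_mat_carrier)
  define R where "R = addrow (- r) 0 1 ?A"
  have R: "R \<in> carrier_mat ?N ?N" using A unfolding R_def by simp
  define C where "C = mat ?N ?N (\<lambda>(i,j).
      if i = 0 then (if j = 0 then ?e else if j = 1 then a - r * d else 0)
      else if j = 0 then (if i = 1 then b - r * d else 0) else ?A $$ (i,j))"
  have C: "C \<in> carrier_mat ?N ?N" unfolding C_def by simp
  have reduced: "addcol (- r) 0 1 R = C"
  proof (rule eq_matI)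
    fix i j assume "i < dim_row C" and "j < dim_col C"
    then have i: "i < ?N" and j: "j < ?N" unfolding C_def by auto
    have "i = 0 \<or> i = 1 \<or> (\<exists>k. i = Suc (Suc k))" "j = 0 \<or> j = 1 \<or> (\<exists>k. j = Suc (Suc k))"
      by presburger+
    with i j R A show "addcol (- r) 0 1 R $$ (i,j) = C $$ (i,j)"
      by (auto simp: R_def C_def geom_toeplitz_mat_def algebra_simps power2_eq_square)
  qed (auto simp: R_def C_def geom_toeplitz_mat_def)
  have "det ?A = det (addcol (- r) 0 1 R)"
    using det_addcol[OF _ _ R, of 1 0] det_addrow[OF _ _ A, of 1 0] unfolding R_def by simp
  also have "\<dots> = det C" by (simp only: reduced)
  also have "\<dots> = (\<Sum>j<?N. C $$ (0,j) * cofactor C 0 j)"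
    by (rule laplace_expansion_row[OF C]) simp
  also have "\<dots> = ?e * cofactor C 0 0 + (a - r * d) * cofactor C 0 1"
    by (simp only: sum.lessThan_Suc_shift) (simp add: C_def)
  finally have expand_row: "det ?A = ?e * cofactor C 0 0 + (a - r * d) * cofactor C 0 1" .
  let ?C' = "mat_delete C 0 1"
  have C': "?C' \<in> carrier_mat (Suc n) (Suc n)" using mat_delete_carrier[OF C] by simp
  have "det ?C' = (\<Sum>i<Suc n. ?C' $$ (i,0) * cofactor ?C' i 0)"
    by (rule laplace_expansion_column[OF C']) simp
  also have "\<dots> = (b - r * d) * cofactor ?C' 0 0"
    by (simp only: sum.lessThan_Suc_shift) (simp add: C_def mat_delete_def)
  finally have expand_col: "det ?C' = (b - r * d) * cofactor ?C' 0 0" .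
  have "mat_delete C 0 0 = geom_toeplitz_mat (Suc n) d a b r"
       "mat_delete ?C' 0 0 = geom_toeplitz_mat n d a b r"
    by (auto intro!: eq_matI simp: mat_delete_def C_def geom_toeplitz_mat_def)
  with expand_row expand_col show ?thesis by (simp add: cofactor_def)
qed

lemma two_term_recurrence_unique:
  fixes f g :: "nat \<Rightarrow> 'a::comm_ring_1"
  assumes "f 0 = g 0" and "f 1 = g 1"
    and "\<And>k. f (Suc (Suc k)) = p * f (Suc k) - q * f k"
    and "\<And>k. g (Suc (Suc k)) = p * g (Suc k) - q * g k"
  shows "f k = g k"
proof -
  have "f k = g k \<and> f (Suc k) = g (Suc k)"
    by (induction k) (use assms in auto)
  then show ?thesis ..
qed

lemma Re_mult_power_Suc_Suc:
  fixes u w :: complex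
  shows "Re (u * w ^ Suc (Suc n)) = 2 * Re w * Re (u * w ^ Suc n) - (cmod w)\<^sup>2 * Re (u * w ^ n)"
proof -
  have square: "w * w = of_real (2 * Re w) * w - of_real ((cmod w)\<^sup>2)"
    using cmod_power2[of w] by (simp add: complex_eq_iff power2_eq_square algebra_simps)
  have "u * w ^ Suc (Suc n) = (u * w ^ n) * (w * w)" by (simp add: algebra_simps)
  also have "\<dots> = of_real (2 * Re w) * (u * w ^ Suc n) - of_real ((cmod w)\<^sup>2) * (u * w ^ n)"
    unfolding square by (simp add: algebra_simps)
  finally show ?thesis by simp
qed

lemma Re_mult_power_halves_Suc_Suc:
  fixes u w :: complex
  defines "F \<equiv> \<lambda>k. Re (u * w ^ k) / 2 ^ k"
  shows "F (Suc (Suc k)) = Re w * F (Suc k) - (cmod w)\<^sup>2 / 4 * F k"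
  unfolding F_def Re_mult_power_Suc_Suc by (simp add: field_simps)

lemma Dn_eq_det_geom_toeplitz:
  "Dn n \<alpha> lam \<theta> = det (geom_toeplitz_mat n (of_real (- \<alpha> * cos \<theta> - lam))
     (exp (- \<i> * of_real \<theta>) * of_real ((1 - \<alpha>\<^sup>2) / 2))
     (exp (\<i> * of_real \<theta>) * of_real ((1 - \<alpha>\<^sup>2) / 2)) (of_real \<alpha>))"
proof -
  let ?c = "exp (- (\<i> * complex_of_real \<theta>))"
  have cnj_c: "cnj ?c = exp (\<i> * complex_of_real \<theta>)"
    by (simp add: complex_eq_iff Re_exp Im_exp)
  have diag: "- (?c * of_real \<alpha>) - cnj ?c * of_real \<alpha> = - (of_real \<alpha> * of_real (cos \<theta>) * 2)"
    by (simp add: complex_eq_iff Re_exp Im_exp)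
  show ?thesis
    unfolding Dn_def
    by (rule arg_cong[where f = det], rule eq_matI)
       (auto simp: Re_mat_def cadjoint_def Mmat_def geom_toeplitz_mat_def diag cnj_c[symmetric])
qed

lemma Dn_0: "Dn 0 \<alpha> lam \<theta> = 1"
  unfolding Dn_eq_det_geom_toeplitz by (rule det_geom_toeplitz_0)

lemma Dn_1: "Dn 1 \<alpha> lam \<theta> = of_real (- \<alpha> * cos \<theta> - lam)"
  unfolding Dn_eq_det_geom_toeplitz by (rule det_geom_toeplitz_1)

lemma Dn_Suc_Suc:
  "Dn (Suc (Suc k)) \<alpha> lam \<theta> =
     of_real (- 2 * \<alpha> * cos \<theta> - (1 + \<alpha>\<^sup>2) * lam) * Dn (Suc k) \<alpha> lam \<theta>
     - of_real ((((1 + \<alpha>\<^sup>2) * cos \<theta> + 2 * \<alpha> * lam)\<^sup>2 + ((1 - \<alpha>\<^sup>2) * sin \<theta>)\<^sup>2) / 4)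
       * Dn k \<alpha> lam \<theta>"
proof -
  define d where "d = complex_of_real (- \<alpha> * cos \<theta> - lam)"
  define a where "a = exp (- \<i> * complex_of_real \<theta>) * of_real ((1 - \<alpha>\<^sup>2) / 2)"
  define b where "b = exp (\<i> * complex_of_real \<theta>) * of_real ((1 - \<alpha>\<^sup>2) / 2)"
  have trace_coeff: "(1 + (of_real \<alpha>)\<^sup>2) * d - of_real \<alpha> * (a + b)
      = of_real (- 2 * \<alpha> * cos \<theta> - (1 + \<alpha>\<^sup>2) * lam)"
    unfolding a_def b_def d_def
    by (simp add: complex_eq_iff Re_exp Im_exp power2_eq_square field_simps)
  have "b - of_real \<alpha> * d = cnj (a - of_real \<alpha> * d)"
    unfolding a_def b_def d_def by (simp add: complex_eq_iff Re_exp Im_exp)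
  then have "(a - of_real \<alpha> * d) * (b - of_real \<alpha> * d) = of_real ((cmod (a - of_real \<alpha> * d))\<^sup>2)"
    by (simp only: complex_norm_square)
  also have "\<dots> = of_real ((((1 + \<alpha>\<^sup>2) * cos \<theta> + 2 * \<alpha> * lam)\<^sup>2 + ((1 - \<alpha>\<^sup>2) * sin \<theta>)\<^sup>2) / 4)"
    unfolding a_def d_def cmod_power2
    by (simp add: Re_exp Im_exp power2_eq_square field_simps)
  finally have product_coeff: "(a - of_real \<alpha> * d) * (b - of_real \<alpha> * d)
      = of_real ((((1 + \<alpha>\<^sup>2) * cos \<theta> + 2 * \<alpha> * lam)\<^sup>2 + ((1 - \<alpha>\<^sup>2) * sin \<theta>)\<^sup>2) / 4)" .
  show ?thesis
    unfolding Dn_eq_det_geom_toeplitz det_geom_toeplitz_Suc_Suc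
    unfolding a_def [symmetric] b_def [symmetric] d_def [symmetric] trace_coeff product_coeff ..
qed

text \<open>Half the complex number on the left and its conjugate are the roots of the characteristic
  polynomial of the recurrence \<open>Dn_Suc_Suc\<close>.\<close>
lemma cmod_char_root_power2:
  fixes \<alpha> c sn lam s :: real
  assumes "sn\<^sup>2 + c\<^sup>2 = 1" and "s\<^sup>2 + lam\<^sup>2 = 1"
  shows "(cmod (of_real (- 2 * \<alpha> * c - (1 + \<alpha>\<^sup>2) * lam) + \<i> * of_real ((1 - \<alpha>\<^sup>2) * s)))\<^sup>2
       = ((1 + \<alpha>\<^sup>2) * c + 2 * \<alpha> * lam)\<^sup>2 + ((1 - \<alpha>\<^sup>2) * sn)\<^sup>2"
proof -
  have "(cmod (of_real (- 2 * \<alpha> * c - (1 + \<alpha>\<^sup>2) * lam) + \<i> * of_real ((1 - \<alpha>\<^sup>2) * s)))\<^sup>2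
       - (((1 + \<alpha>\<^sup>2) * c + 2 * \<alpha> * lam)\<^sup>2 + ((1 - \<alpha>\<^sup>2) * sn)\<^sup>2)
       = (1 - \<alpha>\<^sup>2)\<^sup>2 * ((s\<^sup>2 + lam\<^sup>2) - (sn\<^sup>2 + c\<^sup>2))"
    unfolding cmod_power2 by (simp add: power2_eq_square algebra_simps)
  then show ?thesis using assms by simp
qed

theorem mainTheorem7:
  fixes n :: nat and \<alpha> lam \<theta> :: real
  assumes "n \<ge> 2" and "0 \<le> \<alpha>" and "\<alpha> < 1" and "\<bar>lam\<bar> < 1"
  shows "Dn n \<alpha> lam \<theta> = complex_of_real (
    (1 / sqrt (1 - lam\<^sup>2)) / 2 ^ n *
    Re ((complex_of_real (sqrt (1 - lam\<^sup>2)) + \<i> * complex_of_real lam) *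
        (complex_of_real (- 2 * \<alpha> * cos \<theta> - (1 + \<alpha>\<^sup>2) * lam)
         + \<i> * complex_of_real ((1 - \<alpha>\<^sup>2) * sqrt (1 - lam\<^sup>2))) ^ n))"
proof -
  define s where "s = sqrt (1 - lam\<^sup>2)"
  define X where "X = - 2 * \<alpha> * cos \<theta> - (1 + \<alpha>\<^sup>2) * lam"
  define w where "w = complex_of_real X + \<i> * complex_of_real ((1 - \<alpha>\<^sup>2) * s)"
  define u where "u = complex_of_real s + \<i> * complex_of_real lam"
  define G where "G = (\<lambda>k. Re (u * w ^ k) / 2 ^ k)"
  define F where "F = (\<lambda>k. complex_of_real (G k / s))"
  have "lam\<^sup>2 < 1" using assms(4) by (simp add: abs_square_less_1)
  then have s: "s > 0" "s\<^sup>2 + lam\<^sup>2 = 1" unfolding s_def by simp_all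
  have modulus: "((1 + \<alpha>\<^sup>2) * cos \<theta> + 2 * \<alpha> * lam)\<^sup>2 + ((1 - \<alpha>\<^sup>2) * sin \<theta>)\<^sup>2 = (cmod w)\<^sup>2"
    unfolding w_def X_def using cmod_char_root_power2[OF sin_cos_squared_add s(2)] by simp
  have "Dn k \<alpha> lam \<theta> = F k" for k
  proof (rule two_term_recurrence_unique[where p = "of_real X" and q = "of_real ((cmod w)\<^sup>2 / 4)"])
    show "Dn 0 \<alpha> lam \<theta> = F 0" "Dn 1 \<alpha> lam \<theta> = F 1"
      using s unfolding Dn_0 Dn_1
      by (simp_all add: F_def G_def u_def w_def X_def field_simps power2_eq_square)
    show "Dn (Suc (Suc k)) \<alpha> lam \<theta>
        = of_real X * Dn (Suc k) \<alpha> lam \<theta> - of_real ((cmod w)\<^sup>2 / 4) * Dn k \<alpha> lam \<theta>" for k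
      unfolding Dn_Suc_Suc modulus X_def ..
    show "F (Suc (Suc k)) = of_real X * F (Suc k) - of_real ((cmod w)\<^sup>2 / 4) * F k" for k
    proof -
      have "Re w = X" by (simp add: w_def)
      then have "G (Suc (Suc k)) = X * G (Suc k) - (cmod w)\<^sup>2 / 4 * G k"
        using Re_mult_power_halves_Suc_Suc[of u w k] unfolding G_def by simp
      then show ?thesis unfolding F_def by (simp add: diff_divide_distrib)
    qed
  qed
  then show ?thesis unfolding F_def G_def u_def w_def s_def X_def by (simp add: field_simps)
qed

end
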